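(* Let $A_1,\dots,A_p\in M_m$, let $\langle\mathcal{S}\rangle_0$ (resp. $\langle\mathcal{S}\rangle_1$) be the unital (resp. not necessarily unital) subalgebra of $M_m$ generated by $A_1,\dots,A_p$, and let $\tau(X)=\sum_{i=1}^pA_i^*XA_i$ on $M_m$. Let $(a_n)_{n\ge0}$ be strictly positive scalars such that $\sum_{n\ge0}a_n\tau^n$ converges in norm. Then for $j=0,1$ there exists a natural number $N_j\le m^2$ such that the coefficient space of $\sum_{n=j}^{N_j}a_n\tau^n$ equals $\langle\mathcal{S}\rangle_j$, and the Choi rank of $\sum_{n=j}^{N_j}a_n\tau^n$ equals $\dim\langle\mathcal{S}\rangle_j$.
   Context: $\tau^0$ is the identity map. For a completely positive map $\sigma$ on $M_m$ with Choi-Kraus decomposition $\sigma(X)=\sum_kC_k^*XC_k$, the coefficient space of $\sigma$ is $\mathrm{span}\{C_k\}$ (independent of the decomposition) and its dimension is the Choi rank of $\sigma$. *)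

theory Defs
  imports "HOL-Analysis.Analysis"
begin

type_synonym 'm cmat = "complex^'m^'m"

definition cscale :: "complex \<Rightarrow> 'm::finite cmat \<Rightarrow> 'm cmat" where
  "cscale c A = (\<chi> i j. c * A $ i $ j)"

definition cadj :: "'m::finite cmat \<Rightarrow> 'm cmat" where
  "cadj A = (\<chi> i j. cnj (A $ j $ i))"

definition is_subalg :: "'m::finite cmat set \<Rightarrow> bool" where
  "is_subalg B \<longleftrightarrow> module.subspace cscale B \<and> (\<forall>x\<in>B. \<forall>y\<in>B. x ** y \<in> B)"

definition gen_alg :: "bool \<Rightarrow> 'm::finite cmat set \<Rightarrow> 'm cmat set" where
  "gen_alg unital S = \<Inter>{B. is_subalg B \<and> S \<subseteq> B \<and> (unital \<longrightarrow> mat 1 \<in> B)}"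

definition is_kraus :: "('m::finite cmat \<Rightarrow> 'm cmat) \<Rightarrow> 'm cmat list \<Rightarrow> bool" where
  "is_kraus \<sigma> Cs \<longleftrightarrow> (\<forall>X. \<sigma> X = (\<Sum>C\<leftarrow>Cs. cadj C ** X ** C))"

text \<open>Coefficient space: the span of the Kraus operators of a Choi-Kraus decomposition
  (independent of the decomposition).\<close>
definition coeff_space :: "('m::finite cmat \<Rightarrow> 'm cmat) \<Rightarrow> 'm cmat set" where
  "coeff_space \<sigma> = (THE V. \<exists>Cs. is_kraus \<sigma> Cs \<and> V = module.span cscale (set Cs))"

definition choi_rank :: "('m::finite cmat \<Rightarrow> 'm cmat) \<Rightarrow> nat" where
  "choi_rank \<sigma> = vector_space.dim cscale (coeff_space \<sigma>)"

end

theory Submission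
  imports Defs
begin

text \<open>The words of length n in A_1, ..., A_p are Kraus operators of tau^n, so the partial
  sum of a_n tau^n over j <= n <= N has the Kraus operators sqrt(a_n) W, and its coefficient
  space is the span V_N of the words of length between j and N. The coefficient space is well
  defined because the span of Kraus operators C_k of sigma is the common kernel of the linear
  functionals g with sum_k |g C_k|^2 = 0, a quantity that can be computed from sigma alone.
  The spaces V_N increase inside the m^2-dimensional space M_m, so V_(N+1) = V_N for some
  N <= m^2. Words of length N + 2 are words of length N + 1 times a generator, hence the chain
  is constant from then on and V_N is the span of all words of length at least j: the unital
  (j = 0) or non-unital (j = 1) algebra generated by the A_i.\<close>

lemma (in vector_space) separating_functional:
  assumes "x \<notin> span S"
  obtains g where "Vector_Spaces.linear scale (*) g" "\<And>y. y \<in> S \<Longrightarrow> g y = 0" "g x = 1"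
proof -
  interpret scalars: vector_space "(*) :: 'a \<Rightarrow> 'a \<Rightarrow> 'a"
    by unfold_locales (simp_all add: algebra_simps)
  interpret vector_space_pair scale "(*) :: 'a \<Rightarrow> 'a \<Rightarrow> 'a" ..
  obtain B where B: "B \<subseteq> S" "independent B" "S \<subseteq> span B"
    using maximal_independent_subset by blast
  have "x \<notin> span B"
    using assms B(1) span_mono by blast
  then have "independent (insert x B)"
    using B(2) independent_insertI by blast
  then obtain g where g: "Vector_Spaces.linear scale (*) g"
    and g_ins: "\<forall>y\<in>insert x B. g y = (if y = x then 1 else 0)"
    using linear_independent_extend[of "insert x B" "\<lambda>y. if y = x then 1 else 0"] by blast
  have "g y = 0" if "y \<in> S" for y
    using linear_eq_0_on_span[OF g, of B y] g_ins \<open>x \<notin> span B\<close> B(3) that span_base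
    by fastforce
  with g g_ins show thesis using that by simp
qed

lemma (in vector_space) span_UN_scale:
  assumes "\<And>n. n \<in> I \<Longrightarrow> c n \<noteq> 0"
  shows "span (\<Union>n\<in>I. (\<lambda>x. c n *s x) ` W n) = span (\<Union>n\<in>I. W n)"
proof (rule span_eq[THEN iffD2], intro conjI subsetI)
  fix y assume "y \<in> (\<Union>n\<in>I. (\<lambda>x. c n *s x) ` W n)"
  then obtain n x where "n \<in> I" "x \<in> W n" "y = c n *s x"
    by blast
  moreover from this(1,2) have "x \<in> span (\<Union>n\<in>I. W n)"
    by (intro span_base) blast
  ultimately show "y \<in> span (\<Union>n\<in>I. W n)"
    by (simp add: span_scale)
next
  fix x assume "x \<in> (\<Union>n\<in>I. W n)"
  then obtain n where n: "n \<in> I" "x \<in> W n" by blast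
  then have "c n *s x \<in> span (\<Union>n\<in>I. (\<lambda>x. c n *s x) ` W n)"
    by (intro span_base) blast
  then have "inverse (c n) *s (c n *s x) \<in> span (\<Union>n\<in>I. (\<lambda>x. c n *s x) ` W n)"
    by (rule span_scale)
  then show "x \<in> span (\<Union>n\<in>I. (\<lambda>x. c n *s x) ` W n)"
    using assms[OF n(1)] by simp
qed

lemma (in finite_dimensional_vector_space) mono_subspace_chain_stabilizes:
  assumes "mono V" and "\<And>k. subspace (V k)"
  shows "\<exists>k \<le> dimension. V (Suc k) = V k"
proof (rule ccontr)
  assume "\<not> ?thesis"
  then have strict: "V k \<subset> V (Suc k)" if "k \<le> dimension" for k
    using that monoD[OF assms(1), of k "Suc k"] by auto
  have span_V: "span (V k) = V k" for k
    by (simp add: assms(2) span_eq_iff)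
  have "k \<le> dim (V k)" if "k \<le> Suc dimension" for k
    using that
  proof (induction k)
    case (Suc k)
    then have "dim (V k) < dim (V (Suc k))"
      using strict by (intro dim_psubset) (simp add: span_V)
    with Suc show ?case by simp
  qed simp
  then show False
    using dim_subset_UNIV[of "V (Suc dimension)"] by fastforce
qed

section \<open>Matrices as a complex vector space\<close>

lemma cscale_nth [simp]: "cscale c X $ i $ j = c * X $ i $ j"
  by (simp add: cscale_def)

interpretation cv: vector_space cscale
  by unfold_locales (auto simp: vec_eq_iff algebra_simps)

interpretation scalars: vector_space "(*) :: complex \<Rightarrow> complex \<Rightarrow> complex"
  by unfold_locales (simp_all add: algebra_simps)

interpretation cv_scalars: vector_space_pair cscale "(*) :: complex \<Rightarrow> complex \<Rightarrow> complex" ..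

interpretation cv_cv: vector_space_pair cscale cscale ..

abbreviation cmat_functional :: "('m::finite cmat \<Rightarrow> complex) \<Rightarrow> bool" where
  "cmat_functional g \<equiv> Vector_Spaces.linear cscale (*) g"

definition mat_unit :: "'m::finite \<Rightarrow> 'm \<Rightarrow> 'm cmat" where
  "mat_unit a b = (\<chi> i j. if i = a \<and> j = b then 1 else 0)"

lemma mat_unit_nth [simp]: "mat_unit a b $ i $ j = (if i = a \<and> j = b then 1 else 0)"
  by (simp add: mat_unit_def)

lemma sum_sum_delta:
  fixes i :: "'a::finite" and j :: "'b::finite"
  shows "(\<Sum>a\<in>UNIV. \<Sum>b\<in>UNIV. if i = a \<and> j = b then f a b else 0) = f i j"
proof -
  have "(\<Sum>b\<in>UNIV. if i = a \<and> j = b then f a b else 0) = (if i = a then f a j else 0)" for a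
    by (cases "i = a") (simp_all add: sum.delta)
  then show ?thesis
    by (simp add: sum.delta)
qed

lemma cmat_expansion: "X = (\<Sum>a\<in>UNIV. \<Sum>b\<in>UNIV. cscale (X $ a $ b) (mat_unit a b))"
  by (simp add: vec_eq_iff sum_component if_distrib sum_sum_delta cong: if_cong)

lemma mat_unit_eq_iff: "mat_unit a b = mat_unit c d \<longleftrightarrow> a = c \<and> b = d"
  by (metis (full_types) mat_unit_nth zero_neq_one)

lemma independent_mat_units: "cv.independent (range (case_prod mat_unit) :: 'm::finite cmat set)"
  unfolding cv.independent_explicit_module
proof (intro allI impI)
  fix t u v
  assume t: "finite t" "t \<subseteq> range (case_prod mat_unit)" "(\<Sum>v\<in>t. cscale (u v) v) = (0 :: 'm cmat)"
    and "v \<in> t"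
  then obtain a b where v: "v = mat_unit a b" by auto
  have "0 = (\<Sum>w\<in>t. cscale (u w) w) $ a $ b"
    using t(3) by simp
  also have "\<dots> = (\<Sum>w\<in>t. if w = v then u w else 0)"
    unfolding sum_component
  proof (intro sum.cong refl)
    fix w assume "w \<in> t"
    then obtain c d where "w = mat_unit c d" using t(2) by auto
    then show "cscale (u w) w $ a $ b = (if w = v then u w else 0)"
      by (auto simp: v mat_unit_eq_iff)
  qed
  also have "\<dots> = u v"
    using t(1) \<open>v \<in> t\<close> by simp
  finally show "u v = 0" by simp
qed

lemma span_mat_units: "cv.span (range (case_prod mat_unit) :: 'm::finite cmat set) = UNIV"
proof -
  have "X \<in> cv.span (range (case_prod mat_unit))" for X :: "'m cmat"
    by (subst cmat_expansion) (intro cv.span_sum cv.span_scale cv.span_base; auto)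
  then show ?thesis by auto
qed

interpretation cvf: finite_dimensional_vector_space cscale "range (case_prod mat_unit) :: 'm::finite cmat set"
  by unfold_locales (simp_all add: independent_mat_units span_mat_units)

lemma dimension_cmat: "cvf.dimension TYPE('m::finite) = CARD('m)^2"
proof -
  have "inj (case_prod (mat_unit :: 'm \<Rightarrow> 'm \<Rightarrow> 'm cmat))"
    by (auto simp: inj_def mat_unit_eq_iff)
  then show ?thesis
    by (simp add: cvf.dimension_def card_image power2_eq_square)
qed

lemma cmat_functional_expansion:
  assumes "cmat_functional g"
  shows "g X = (\<Sum>a\<in>UNIV. \<Sum>b\<in>UNIV. X $ a $ b * g (mat_unit a b))"
proof -
  interpret Vector_Spaces.linear cscale "(*) :: complex \<Rightarrow> complex \<Rightarrow> complex" g by fact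
  show ?thesis
    by (subst cmat_expansion) (simp add: sum scale)
qed

lemma matrix_add_rdistrib: "(A + B) ** C = A ** C + B ** (C :: 'a::semiring_1^'n^'k)"
  by (vector matrix_matrix_mult_def sum.distrib[symmetric] field_simps)

lemma sum_list_matrix_mult_left: "M ** (\<Sum>x\<leftarrow>xs. f x) = (\<Sum>x\<leftarrow>xs. M ** f x :: 'a::semiring_1^'n^'k)"
  by (induction xs) (simp_all add: matrix_add_ldistrib)

lemma sum_list_matrix_mult_right: "(\<Sum>x\<leftarrow>xs. f x) ** M = (\<Sum>x\<leftarrow>xs. f x ** M :: 'a::semiring_1^'n^'k)"
  by (induction xs) (simp_all add: matrix_add_rdistrib)

lemma cscale_matrix_mult_left: "cscale c X ** Y = cscale c (X ** Y :: 'm::finite cmat)"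
  by (simp add: vec_eq_iff cscale_def matrix_matrix_mult_def sum_distrib_left mult_ac)

lemma cscale_matrix_mult_right: "X ** cscale c Y = cscale c (X ** Y :: 'm::finite cmat)"
  by (simp add: vec_eq_iff cscale_def matrix_matrix_mult_def sum_distrib_left mult_ac)

lemma linear_matrix_mult_left: "Vector_Spaces.linear cscale cscale (\<lambda>X. M ** X :: 'm::finite cmat)"
  by unfold_locales (simp_all add: matrix_add_ldistrib cscale_matrix_mult_right)

lemma linear_matrix_mult_right: "Vector_Spaces.linear cscale cscale (\<lambda>X. X ** M :: 'm::finite cmat)"
  by unfold_locales (simp_all add: matrix_add_rdistrib cscale_matrix_mult_left)

lemma scaleR_cmat_eq_cscale: "r *\<^sub>R X = cscale (of_real r) (X :: 'm::finite cmat)"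
  by (simp add: vec_eq_iff scaleR_conv_of_real[where 'a=complex])

lemma cadj_matrix_mult: "cadj (B ** C) = cadj C ** cadj (B :: 'm::finite cmat)"
  by (simp add: vec_eq_iff cadj_def matrix_matrix_mult_def mult.commute)

lemma cadj_scaleR: "cadj (r *\<^sub>R B) = r *\<^sub>R cadj (B :: 'm::finite cmat)"
  by (simp add: vec_eq_iff cadj_def)

lemma cadj_mat_1 [simp]: "cadj (mat 1 :: 'm::finite cmat) = mat 1"
  by (simp add: vec_eq_iff cadj_def mat_def)

lemma matrix_mult_mem_span:
  assumes closed: "\<And>V W. V \<in> S \<Longrightarrow> W \<in> S \<Longrightarrow> V ** W \<in> cv.span S"
    and "X \<in> cv.span S" and "Y \<in> cv.span S"
  shows "X ** Y \<in> cv.span (S :: 'm::finite cmat set)"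
proof -
  have left: "V ** Y \<in> cv.span S" if "V \<in> S" for V
  proof -
    have "S \<subseteq> (\<lambda>W. V ** W) -` cv.span S"
      using closed \<open>V \<in> S\<close> by blast
    then have "cv.span S \<subseteq> (\<lambda>W. V ** W) -` cv.span S"
      by (intro cv.span_minimal cv_cv.linear_subspace_vimage[OF linear_matrix_mult_left] cv.subspace_span)
    then show ?thesis
      using \<open>Y \<in> cv.span S\<close> by blast
  qed
  have "cv.span S \<subseteq> (\<lambda>V. V ** Y) -` cv.span S"
    using left by (intro cv.span_minimal cv_cv.linear_subspace_vimage[OF linear_matrix_mult_right] cv.subspace_span)
      blast
  then show ?thesis
    using \<open>X \<in> cv.span S\<close> by blast
qed

section \<open>Kraus maps and coefficient spaces\<close>

definition kraus_map :: "'m::finite cmat list \<Rightarrow> 'm cmat \<Rightarrow> 'm cmat" where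
  "kraus_map Cs X = (\<Sum>C\<leftarrow>Cs. cadj C ** X ** C)"

lemma is_kraus_iff: "is_kraus \<sigma> Cs \<longleftrightarrow> \<sigma> = kraus_map Cs"
  by (simp add: is_kraus_def kraus_map_def fun_eq_iff)

lemma kraus_map_Nil [simp]: "kraus_map [] X = 0"
  and kraus_map_Cons: "kraus_map (C # Cs) X = cadj C ** X ** C + kraus_map Cs X"
  by (simp_all add: kraus_map_def)

lemma kraus_map_mat_1 [simp]: "kraus_map [mat 1] X = X"
  by (simp add: kraus_map_def)

lemma kraus_map_kraus_map: "kraus_map Cs (kraus_map Ds X) = kraus_map [D ** C. C \<leftarrow> Cs, D \<leftarrow> Ds] X"
  by (induction Cs) (simp_all add: kraus_map_def sum_list_matrix_mult_left sum_list_matrix_mult_right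
      cadj_matrix_mult matrix_mul_assoc o_def)

lemma sum_list_kraus_map: "(\<Sum>n\<leftarrow>ns. kraus_map (Cs n) X) = kraus_map (concat (map Cs ns)) X"
  by (induction ns) (simp_all add: kraus_map_def)

lemma scaleR_kraus_map:
  assumes "0 \<le> r"
  shows "r *\<^sub>R kraus_map Cs X = kraus_map (map (\<lambda>C. sqrt r *\<^sub>R C) Cs) X"
proof -
  have "r *\<^sub>R (cadj C ** X ** C) = cadj (sqrt r *\<^sub>R C) ** X ** (sqrt r *\<^sub>R C)" for C
    using assms by (simp add: cadj_scaleR matrix_scalar_ac scalar_matrix_assoc[symmetric])
  then show ?thesis
    by (induction Cs) (simp_all add: kraus_map_def scaleR_right_distrib)
qed

definition kraus_form :: "('m::finite cmat \<Rightarrow> 'm cmat) \<Rightarrow> ('m cmat \<Rightarrow> complex) \<Rightarrow> complex" where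
  "kraus_form \<sigma> g = (\<Sum>a\<in>UNIV. \<Sum>i\<in>UNIV. \<Sum>b\<in>UNIV. \<Sum>j\<in>UNIV.
     cnj (g (mat_unit a i)) * g (mat_unit b j) * \<sigma> (mat_unit a b) $ i $ j)"

lemma kraus_form_single:
  assumes "cmat_functional g"
  shows "kraus_form (\<lambda>X. cadj C ** X ** C) g = cnj (g C) * g C"
proof -
  have entry: "(cadj C ** mat_unit a b ** C) $ i $ j = cnj (C $ a $ i) * C $ b $ j" for a b i j
  proof -
    have "(cadj C ** mat_unit a b ** C) $ i $ j
        = (\<Sum>k\<in>UNIV. \<Sum>l\<in>UNIV. if a = l \<and> b = k then cnj (C $ l $ i) * C $ k $ j else 0)"
      by (auto simp: matrix_matrix_mult_def cadj_def sum_distrib_right intro!: sum.cong)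
    also have "\<dots> = cnj (C $ a $ i) * C $ b $ j"
      by (subst sum.swap) (rule sum_sum_delta)
    finally show ?thesis .
  qed
  have "cnj (g C) * g C
      = (\<Sum>a\<in>UNIV. \<Sum>i\<in>UNIV. cnj (C $ a $ i * g (mat_unit a i))) * (\<Sum>b\<in>UNIV. \<Sum>j\<in>UNIV. C $ b $ j * g (mat_unit b j))"
    by (simp add: cmat_functional_expansion[OF assms, of C])
  also have "\<dots> = kraus_form (\<lambda>X. cadj C ** X ** C) g"
    unfolding kraus_form_def entry sum_distrib_right
    by (rule sum.cong[OF refl])+ (simp add: sum_distrib_left mult_ac)
  finally show ?thesis ..
qed

lemma kraus_form_add: "kraus_form (\<lambda>X. \<sigma> X + \<rho> X) g = kraus_form \<sigma> g + kraus_form \<rho> g"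
  by (simp add: kraus_form_def sum.distrib distrib_left)

lemma kraus_form_kraus_map:
  assumes "cmat_functional g"
  shows "kraus_form (kraus_map Cs) g = (\<Sum>C\<leftarrow>Cs. cnj (g C) * g C)"
proof (induction Cs)
  case Nil
  then show ?case by (simp add: kraus_form_def)
next
  case (Cons C Cs)
  then show ?case
    by (simp add: kraus_map_Cons kraus_form_add kraus_form_single[OF assms])
qed

lemma sum_list_cnj_mult_self_eq_0_iff:
  "(\<Sum>x\<leftarrow>xs. cnj (f x) * f x) = 0 \<longleftrightarrow> (\<forall>x\<in>set xs. f x = (0 :: complex))"
proof -
  have "(\<Sum>x\<leftarrow>xs. cnj (f x) * f x) = of_real (\<Sum>x\<leftarrow>xs. (cmod (f x))\<^sup>2)"
    by (induction xs) (simp_all add: complex_norm_square[symmetric] mult.commute[of "cnj _"])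
  moreover have "(\<Sum>x\<leftarrow>xs. (cmod (f x))\<^sup>2) = 0 \<longleftrightarrow> (\<forall>x\<in>set xs. f x = 0)"
    by (subst sum_list_nonneg_eq_0_iff) auto
  ultimately show ?thesis
    by simp
qed

lemma span_eq_kraus_form_annihilator:
  "cv.span (set Cs) = {X. \<forall>g. cmat_functional g \<and> kraus_form (kraus_map Cs) g = 0 \<longrightarrow> g X = 0}"
proof (intro set_eqI iffI CollectI allI impI)
  fix X g
  assume X: "X \<in> cv.span (set Cs)" and g: "cmat_functional g \<and> kraus_form (kraus_map Cs) g = 0"
  then have "(\<Sum>C\<leftarrow>Cs. cnj (g C) * g C) = 0"
    by (metis kraus_form_kraus_map)
  then have "\<forall>C\<in>set Cs. g C = 0"
    by (simp add: sum_list_cnj_mult_self_eq_0_iff)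
  with g X show "g X = 0"
    using cv_scalars.linear_eq_0_on_span by blast
next
  fix X
  assume "X \<in> {X. \<forall>g. cmat_functional g \<and> kraus_form (kraus_map Cs) g = 0 \<longrightarrow> g X = 0}"
  then have annihilated: "\<And>g. cmat_functional g \<Longrightarrow> kraus_form (kraus_map Cs) g = 0 \<Longrightarrow> g X = 0"
    by blast
  show "X \<in> cv.span (set Cs)"
  proof (rule ccontr)
    assume "X \<notin> cv.span (set Cs)"
    then obtain g where g: "cmat_functional g" "\<And>C. C \<in> set Cs \<Longrightarrow> g C = 0" "g X = 1"
      by (rule cv.separating_functional) blast
    then have "kraus_form (kraus_map Cs) g = 0"
      by (simp add: kraus_form_kraus_map sum_list_cnj_mult_self_eq_0_iff)
    then have "g X = 0"
      by (rule annihilated[OF g(1)])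
    with g(3) show False
      by simp
  qed
qed

lemma coeff_space_eq_span:
  assumes "is_kraus \<sigma> Cs"
  shows "coeff_space \<sigma> = cv.span (set Cs)"
  unfolding coeff_space_def
proof (rule the_equality)
  fix V assume "\<exists>Ds. is_kraus \<sigma> Ds \<and> V = cv.span (set Ds)"
  then obtain Ds where "kraus_map Ds = kraus_map Cs" "V = cv.span (set Ds)"
    using assms by (auto simp: is_kraus_iff)
  then show "V = cv.span (set Cs)"
    by (simp only: span_eq_kraus_form_annihilator)
qed (use assms in blast)

section \<open>Words in the generators\<close>

fun words :: "'m::finite cmat list \<Rightarrow> nat \<Rightarrow> 'm cmat list" where
  "words Gs 0 = [mat 1]"
| "words Gs (Suc n) = [W ** G. G \<leftarrow> Gs, W \<leftarrow> words Gs n]"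

lemma words_SucI: "W \<in> set (words Gs n) \<Longrightarrow> G \<in> set Gs \<Longrightarrow> W ** G \<in> set (words Gs (Suc n))"
  by auto

lemma words_SucE:
  assumes "C \<in> set (words Gs (Suc n))"
  obtains G W where "G \<in> set Gs" "W \<in> set (words Gs n)" "C = W ** G"
  using assms by auto

lemma words_mult:
  assumes "V \<in> set (words Gs n)" and "W \<in> set (words Gs k)"
  shows "V ** W \<in> set (words Gs (n + k))"
  using assms(2)
proof (induction k arbitrary: W)
  case 0
  then show ?case using assms(1) by simp
next
  case (Suc k)
  obtain G W' where "G \<in> set Gs" "W' \<in> set (words Gs k)" "W = W' ** G"
    using Suc.prems by (rule words_SucE)
  moreover from this(2) have "V ** W' \<in> set (words Gs (n + k))"
    by (rule Suc.IH)
  ultimately have "(V ** W') ** G \<in> set (words Gs (Suc (n + k)))"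
    by (intro words_SucI)
  with \<open>W = W' ** G\<close> show ?case
    by (simp add: matrix_mul_assoc del: words.simps)
qed

lemma kraus_map_power: "kraus_map Gs ^^ n = kraus_map (words Gs n)"
proof (induction n)
  case 0
  then show ?case by (simp add: fun_eq_iff)
next
  case (Suc n)
  then show ?case by (simp add: fun_eq_iff kraus_map_kraus_map)
qed

definition span_words_between :: "'m::finite cmat list \<Rightarrow> nat \<Rightarrow> nat \<Rightarrow> 'm cmat set" where
  "span_words_between Gs j k = cv.span (\<Union>n\<in>{j..k}. set (words Gs n))"

definition span_words_from :: "'m::finite cmat list \<Rightarrow> nat \<Rightarrow> 'm cmat set" where
  "span_words_from Gs j = cv.span (\<Union>n\<in>{j..}. set (words Gs n))"

lemma coeff_space_partial_sum:
  assumes "\<And>n. 0 < a n"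
  shows "coeff_space (\<lambda>X. \<Sum>n=j..N. a n *\<^sub>R (kraus_map Gs ^^ n) X) = span_words_between Gs j N"
proof -
  define Cs where "Cs = concat (map (\<lambda>n. map (\<lambda>W. sqrt (a n) *\<^sub>R W) (words Gs n)) [j..<Suc N])"
  have "(\<Sum>n=j..N. a n *\<^sub>R (kraus_map Gs ^^ n) X) = kraus_map Cs X" for X
  proof -
    have "(\<Sum>n=j..N. a n *\<^sub>R (kraus_map Gs ^^ n) X) = (\<Sum>n\<leftarrow>[j..<Suc N]. a n *\<^sub>R kraus_map (words Gs n) X)"
      by (simp add: kraus_map_power sum_set_upt_conv_sum_list_nat[symmetric] atLeastLessThanSuc_atLeastAtMost
          del: upt_Suc)
    also have "\<dots> = kraus_map Cs X"
      using assms by (simp add: scaleR_kraus_map less_imp_le sum_list_kraus_map Cs_def)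
    finally show ?thesis .
  qed
  then have "coeff_space (\<lambda>X. \<Sum>n=j..N. a n *\<^sub>R (kraus_map Gs ^^ n) X) = cv.span (set Cs)"
    by (intro coeff_space_eq_span) (simp add: is_kraus_iff fun_eq_iff)
  also have "\<dots> = cv.span (\<Union>n\<in>{j..N}. (\<lambda>W. cscale (of_real (sqrt (a n))) W) ` set (words Gs n))"
    by (simp add: Cs_def scaleR_cmat_eq_cscale atLeastLessThanSuc_atLeastAtMost del: upt_Suc)
  also have "\<dots> = span_words_between Gs j N"
    unfolding span_words_between_def using assms by (intro cv.span_UN_scale) (simp add: less_imp_neq[symmetric])
  finally show ?thesis .
qed

section \<open>Generated algebras and stabilization of the spans of words\<close>

lemma is_subalg_span_words_from: "is_subalg (span_words_from Gs j)"
proof -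
  let ?W = "\<Union>n\<in>{j..}. set (words Gs n)"
  have "V ** W \<in> cv.span ?W" if "V \<in> ?W" and "W \<in> ?W" for V W
  proof -
    from that obtain n k where "j \<le> n" "V \<in> set (words Gs n)" "W \<in> set (words Gs k)"
      by blast
    then have "V ** W \<in> set (words Gs (n + k))"
      by (intro words_mult)
    with \<open>j \<le> n\<close> show ?thesis
      by (intro cv.span_base UN_I[of "n + k"]) auto
  qed
  then show ?thesis
    unfolding is_subalg_def span_words_from_def
    using matrix_mult_mem_span[of ?W] cv.subspace_span by blast
qed

lemma words_Suc_subset_subalg:
  assumes "is_subalg B" and "set Gs \<subseteq> B"
  shows "set (words Gs (Suc n)) \<subseteq> B"
proof (induction n)
  case 0
  from assms(2) show ?case by auto
next
  case (Suc n)
  from assms(1) have closed: "\<And>X Y. X \<in> B \<Longrightarrow> Y \<in> B \<Longrightarrow> X ** Y \<in> B"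
    by (simp add: is_subalg_def)
  show ?case
  proof
    fix C assume "C \<in> set (words Gs (Suc (Suc n)))"
    then obtain G W where "G \<in> set Gs" "W \<in> set (words Gs (Suc n))" "C = W ** G"
      by (rule words_SucE)
    with Suc assms(2) show "C \<in> B"
      using closed by blast
  qed
qed

lemma span_words_from_eq_gen_alg:
  assumes "j \<le> 1"
  shows "span_words_from Gs j = gen_alg (j = 0) (set Gs)"
proof (rule antisym)
  show "span_words_from Gs j \<subseteq> gen_alg (j = 0) (set Gs)"
    unfolding gen_alg_def
  proof (rule Inter_greatest)
    fix B assume "B \<in> {B. is_subalg B \<and> set Gs \<subseteq> B \<and> (j = 0 \<longrightarrow> mat 1 \<in> B)}"
    then have B: "is_subalg B" "set Gs \<subseteq> B" "j = 0 \<longrightarrow> mat 1 \<in> B"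
      by blast+
    have "set (words Gs n) \<subseteq> B" if "j \<le> n" for n
    proof (cases n)
      case 0
      with that B(3) show ?thesis by simp
    next
      case (Suc m)
      with B(1,2) show ?thesis by (simp only: words_Suc_subset_subalg)
    qed
    moreover have "cv.subspace B"
      using B(1) by (simp add: is_subalg_def)
    ultimately show "span_words_from Gs j \<subseteq> B"
      unfolding span_words_from_def by (intro cv.span_minimal UN_least) auto
  qed
next
  have "G \<in> span_words_from Gs j" if "G \<in> set Gs" for G
  proof -
    have "G \<in> set (words Gs 1)"
      using words_SucI[of "mat 1" Gs 0 G] that by simp
    with assms show ?thesis
      unfolding span_words_from_def by (intro cv.span_base UN_I[of 1]) auto
  qed
  moreover have "mat 1 \<in> span_words_from Gs 0"
    unfolding span_words_from_def by (intro cv.span_base UN_I[of 0]) auto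
  ultimately show "gen_alg (j = 0) (set Gs) \<subseteq> span_words_from Gs j"
    unfolding gen_alg_def by (intro Inter_lower CollectI conjI subsetI impI is_subalg_span_words_from) auto
qed

lemma subspace_span_words_between: "cv.subspace (span_words_between Gs j k)"
  by (simp add: span_words_between_def cv.subspace_span)

lemma mono_span_words_between: "mono (span_words_between Gs j)"
  unfolding span_words_between_def by (intro monoI cv.span_mono UN_mono) auto

lemma matrix_mult_mem_span_words_between_Suc:
  assumes "X \<in> span_words_between Gs j k" and "G \<in> set Gs"
  shows "X ** G \<in> span_words_between Gs j (Suc k)"
proof -
  have "(\<lambda>X. X ** G) ` (\<Union>n\<in>{j..k}. set (words Gs n)) \<subseteq> (\<Union>n\<in>{j..Suc k}. set (words Gs n))"
  proof (rule image_subsetI)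
    fix X assume "X \<in> (\<Union>n\<in>{j..k}. set (words Gs n))"
    then obtain n where "n \<in> {j..k}" "X \<in> set (words Gs n)"
      by blast
    moreover from this(2) have "X ** G \<in> set (words Gs (Suc n))"
      using assms(2) by (rule words_SucI)
    ultimately show "X ** G \<in> (\<Union>n\<in>{j..Suc k}. set (words Gs n))"
      by (intro UN_I[of "Suc n"]) auto
  qed
  then have "cv.span ((\<lambda>X. X ** G) ` (\<Union>n\<in>{j..k}. set (words Gs n))) \<subseteq> span_words_between Gs j (Suc k)"
    unfolding span_words_between_def by (rule cv.span_mono)
  then show ?thesis
    using assms(1) unfolding span_words_between_def cv_cv.linear_span_image[OF linear_matrix_mult_right]
    by blast
qed

lemma span_words_between_Suc_Suc:
  assumes "j \<le> Suc k" and "span_words_between Gs j (Suc k) = span_words_between Gs j k"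
  shows "span_words_between Gs j (Suc (Suc k)) = span_words_between Gs j (Suc k)"
proof (rule antisym)
  have "C \<in> span_words_between Gs j (Suc k)"
    if n: "n \<in> {j..Suc (Suc k)}" and C: "C \<in> set (words Gs n)" for n C
  proof (cases "n = Suc (Suc k)")
    case True
    obtain G W where "G \<in> set Gs" "W \<in> set (words Gs (Suc k))" "C = W ** G"
      using C[unfolded True] by (rule words_SucE)
    moreover from this(2) assms(1) have "W \<in> span_words_between Gs j (Suc k)"
      unfolding span_words_between_def by (intro cv.span_base UN_I[of "Suc k"]) auto
    then have "W \<in> span_words_between Gs j k"
      by (simp only: assms(2))
    ultimately show ?thesis
      using matrix_mult_mem_span_words_between_Suc by blast
  next
    case False
    with n C show ?thesis
      unfolding span_words_between_def by (intro cv.span_base UN_I[of n]) auto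
  qed
  then show "span_words_between Gs j (Suc (Suc k)) \<subseteq> span_words_between Gs j (Suc k)"
    unfolding span_words_between_def[of Gs j "Suc (Suc k)"]
    by (intro cv.span_minimal UN_least) (auto simp: span_words_between_def cv.subspace_span)
qed (rule monoD[OF mono_span_words_between], simp)

lemma span_words_between_stable:
  assumes "j \<le> Suc k" and "span_words_between Gs j (Suc k) = span_words_between Gs j k"
    and "k \<le> n"
  shows "span_words_between Gs j n = span_words_between Gs j k"
proof -
  have step: "span_words_between Gs j (Suc i) = span_words_between Gs j i" if "k \<le> i" for i
    using that
  proof (induction rule: dec_induct)
    case (step i)
    with assms(1) show ?case by (intro span_words_between_Suc_Suc) simp_all
  qed (rule assms(2))
  from assms(3) show ?thesis
    by (induction rule: dec_induct) (simp_all add: step)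
qed

lemma span_words_from_eq_between:
  assumes "j \<le> Suc k" and "span_words_between Gs j (Suc k) = span_words_between Gs j k"
  shows "span_words_from Gs j = span_words_between Gs j k"
proof (rule antisym)
  have "C \<in> span_words_between Gs j k" if "j \<le> n" "C \<in> set (words Gs n)" for n C
  proof -
    have "C \<in> span_words_between Gs j (max n k)"
      unfolding span_words_between_def using that by (intro cv.span_base UN_I[of n]) auto
    then show ?thesis
      using span_words_between_stable[OF assms, of "max n k"] by simp
  qed
  then show "span_words_from Gs j \<subseteq> span_words_between Gs j k"
    unfolding span_words_from_def
    by (intro cv.span_minimal UN_least) (auto simp: span_words_between_def cv.subspace_span)
qed (unfold span_words_from_def span_words_between_def, intro cv.span_mono UN_mono, auto)

theorem theorem5p5:
  fixes A :: "nat \<Rightarrow> 'm::finite cmat" and p :: nat and a :: "nat \<Rightarrow> real"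
    and \<tau> :: "'m cmat \<Rightarrow> 'm cmat"
  assumes tau_def: "\<And>X. \<tau> X = (\<Sum>i=1..p. cadj (A i) ** X ** A i)"
    and a_pos: "\<And>n. a n > 0"
    and conv: "summable (\<lambda>n. a n *\<^sub>R Blinfun (\<tau> ^^ n))"
  shows "\<forall>j\<in>{0::nat, 1}. \<exists>N. N \<le> CARD('m)^2 \<and>
           coeff_space (\<lambda>X. \<Sum>n=j..N. a n *\<^sub>R (\<tau> ^^ n) X) = gen_alg (j = 0) (A ` {1..p}) \<and>
           choi_rank (\<lambda>X. \<Sum>n=j..N. a n *\<^sub>R (\<tau> ^^ n) X)
             = vector_space.dim cscale (gen_alg (j = 0) (A ` {1..p}))"
proof
  \<comment> \<open>Only finite partial sums occur.\<close>
  fix j :: nat assume "j \<in> {0, 1}"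
  then have "j \<le> 1" by auto
  define Gs where "Gs = map A [1..<Suc p]"
  have set_Gs: "set Gs = A ` {1..p}"
    by (auto simp: Gs_def)
  have tau: "\<tau> = kraus_map Gs"
    by (simp add: fun_eq_iff tau_def kraus_map_def Gs_def o_def
        sum_set_upt_conv_sum_list_nat[symmetric] atLeastLessThanSuc_atLeastAtMost del: upt_Suc)
  \<comment> \<open>If all A_i vanish, k = 0 < j = 1 is possible: the sum is then empty and both sides are {0}.\<close>
  obtain k where "k \<le> CARD('m)^2" and k: "span_words_between Gs j (Suc k) = span_words_between Gs j k"
    using cvf.mono_subspace_chain_stabilizes[OF mono_span_words_between subspace_span_words_between, of Gs j]
    by (auto simp: dimension_cmat)
  have "coeff_space (\<lambda>X. \<Sum>n=j..k. a n *\<^sub>R (\<tau> ^^ n) X) = span_words_between Gs j k"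
    unfolding tau by (rule coeff_space_partial_sum[OF a_pos])
  also have "\<dots> = span_words_from Gs j"
    using \<open>j \<le> 1\<close> k by (intro span_words_from_eq_between[symmetric]) auto
  also have "\<dots> = gen_alg (j = 0) (A ` {1..p})"
    unfolding set_Gs[symmetric] using \<open>j \<le> 1\<close> by (rule span_words_from_eq_gen_alg)
  finally show "\<exists>N. N \<le> CARD('m)^2 \<and>
      coeff_space (\<lambda>X. \<Sum>n=j..N. a n *\<^sub>R (\<tau> ^^ n) X) = gen_alg (j = 0) (A ` {1..p}) \<and>
      choi_rank (\<lambda>X. \<Sum>n=j..N. a n *\<^sub>R (\<tau> ^^ n) X) = vector_space.dim cscale (gen_alg (j = 0) (A ` {1..p}))"
    using \<open>k \<le> CARD('m)^2\<close> by (auto simp: choi_rank_def)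
qed

end
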